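(* Let $S$ be a finite set, $G$ a finite group and $f:S\to G$ a function. Let $\{\rho\}$ be a complete set of representatives of the equivalence classes of irreducible unitary representations $\rho: G\to U(V_\rho)$, and for each $\rho$ let $P_\rho$ be an orthogonal projector on $V_\rho$, with at least one $P_\rho\neq 0$. Let $\phi=\sum_\rho c_\rho\,\rho^\dagger(P_\rho)\in\mathbb{C}[G]$ with all $c_\rho\in\mathbb{C}$ nonzero. Let $u_S=|S|^{-1/2}\sum_{s\in S}|s\rangle$, let $U_f$ be the unitary on $\mathbb{C}[S]\otimes\mathbb{C}[G]$ with $U_f(|s\rangle\otimes|g\rangle)=|s\rangle\otimes|f(s)g\rangle$, and let $\psi=U_f(u_S\otimes\phi)$. (a) If $f$ is $P_\rho$-constant, then $\psi=u_S\otimes\chi$ for some nonzero $\chi\in\mathbb{C}[G]$; in particular a projective measurement of the first factor onto the span of $u_S$ succeeds with probability 1. (b) If $f$ is $P_\rho$-balanced, then $(\langle u_S|\otimes\mathrm{id})\psi=0$; in particular that measurement succeeds with probability 0.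
   Context: For a finite set $X$, $\mathbb{C}[X]$ is the Hilbert space with orthonormal basis $\{|x\rangle: x\in X\}$; $\mathbb{C}[G]$ is also the group algebra. Each $\rho$ is extended linearly to $\rho:\mathbb{C}[G]\to\mathrm{End}(V_\rho)$, where $\mathrm{End}(V_\rho)$ carries the Hilbert–Schmidt inner product, and $\rho^\dagger(M)=\sum_{h\in G}\mathrm{Tr}(\rho(h)^\dagger M)|h\rangle$ is its adjoint. Definitions: $f$ is $P_\rho$-balanced if $\sum_{s\in S}\rho(f(s))P_\rho=0$ for every $\rho$; $f$ is $P_\rho$-constant if for every $\rho$ there is $x_\rho\in\mathrm{End}(V_\rho)$ with $\rho(f(s))P_\rho=x_\rho$ for all $s\in S$. (For $G=\mathbb{Z}_2$, $P_{\text{trivial}}=0$ and $P_{\text{sign}}=\mathrm{id}$ this recovers the usual constant/balanced functions and the Deutsch–Jozsa algorithm.) *)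

theory Defs
  imports "Jordan_Normal_Form.Matrix" "HOL-Algebra.Group"
begin

definition cadj :: "complex mat \<Rightarrow> complex mat" where
  "cadj M = mat (dim_col M) (dim_row M) (\<lambda>(i, j). cnj (M $$ (j, i)))"

definition mtrace :: "complex mat \<Rightarrow> complex" where
  "mtrace M = (\<Sum>i<dim_row M. M $$ (i, i))"

definition unitary_mat :: "nat \<Rightarrow> complex mat \<Rightarrow> bool" where
  "unitary_mat d U \<longleftrightarrow> U \<in> carrier_mat d d \<and> cadj U * U = 1\<^sub>m d \<and> U * cadj U = 1\<^sub>m d"

definition orth_projector :: "nat \<Rightarrow> complex mat \<Rightarrow> bool" where
  "orth_projector d P \<longleftrightarrow> P \<in> carrier_mat d d \<and> P * P = P \<and> cadj P = P"

definition msum :: "nat \<Rightarrow> ('s \<Rightarrow> complex mat) \<Rightarrow> 's set \<Rightarrow> complex mat" where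
  "msum d A S = mat d d (\<lambda>(i, j). \<Sum>s\<in>S. A s $$ (i, j))"

definition csubspace_vec :: "nat \<Rightarrow> complex vec set \<Rightarrow> bool" where
  "csubspace_vec d W \<longleftrightarrow> W \<subseteq> carrier_vec d \<and> 0\<^sub>v d \<in> W \<and>
     (\<forall>v\<in>W. \<forall>w\<in>W. v + w \<in> W) \<and> (\<forall>a::complex. \<forall>v\<in>W. a \<cdot>\<^sub>v v \<in> W)"

definition unitary_rep :: "('g, 'b) monoid_scheme \<Rightarrow> nat \<Rightarrow> ('g \<Rightarrow> complex mat) \<Rightarrow> bool" where
  "unitary_rep G d \<rho> \<longleftrightarrow> 0 < d \<and> (\<forall>g\<in>carrier G. unitary_mat d (\<rho> g)) \<and>
     (\<forall>g\<in>carrier G. \<forall>h\<in>carrier G. \<rho> (g \<otimes>\<^bsub>G\<^esub> h) = \<rho> g * \<rho> h)"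

definition irreducible_unitary_rep :: "('g, 'b) monoid_scheme \<Rightarrow> nat \<Rightarrow> ('g \<Rightarrow> complex mat) \<Rightarrow> bool" where
  "irreducible_unitary_rep G d \<rho> \<longleftrightarrow> unitary_rep G d \<rho> \<and>
     (\<forall>W. csubspace_vec d W \<and> (\<forall>g\<in>carrier G. \<forall>w\<in>W. \<rho> g *\<^sub>v w \<in> W)
          \<longrightarrow> W = {0\<^sub>v d} \<or> W = carrier_vec d)"

definition rep_equiv :: "('g, 'b) monoid_scheme \<Rightarrow> nat \<Rightarrow> ('g \<Rightarrow> complex mat) \<Rightarrow> nat \<Rightarrow> ('g \<Rightarrow> complex mat) \<Rightarrow> bool" where
  "rep_equiv G d \<rho> d' \<rho>' \<longleftrightarrow> d = d' \<and> (\<exists>T. T \<in> carrier_mat d d \<and> invertible_mat T \<and>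
     (\<forall>g\<in>carrier G. T * \<rho> g = \<rho>' g * T))"

text \<open>R is a complete set of representatives of the equivalence classes of irreducible unitary
  representations of G; dimV \<rho> is the dimension of V_\<rho>.\<close>
definition complete_irreps :: "('g, 'b) monoid_scheme \<Rightarrow> ('g \<Rightarrow> complex mat) set \<Rightarrow> (('g \<Rightarrow> complex mat) \<Rightarrow> nat) \<Rightarrow> bool" where
  "complete_irreps G R dimV \<longleftrightarrow>
     (\<forall>\<rho>\<in>R. irreducible_unitary_rep G (dimV \<rho>) \<rho>) \<and>
     (\<forall>\<rho>\<in>R. \<forall>\<rho>'\<in>R. rep_equiv G (dimV \<rho>) \<rho> (dimV \<rho>') \<rho>' \<longrightarrow> \<rho> = \<rho>') \<and>
     (\<forall>d \<sigma>. irreducible_unitary_rep G d \<sigma> \<longrightarrow> (\<exists>\<rho>\<in>R. rep_equiv G d \<sigma> (dimV \<rho>) \<rho>))"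

definition rho_dag :: "('g, 'b) monoid_scheme \<Rightarrow> ('g \<Rightarrow> complex mat) \<Rightarrow> complex mat \<Rightarrow> ('g \<Rightarrow> complex)" where
  "rho_dag G \<rho> M = (\<lambda>h. if h \<in> carrier G then mtrace (cadj (\<rho> h) * M) else 0)"

definition uS :: "'s set \<Rightarrow> ('s \<Rightarrow> complex)" where
  "uS S = (\<lambda>s. if s \<in> S then complex_of_real (1 / sqrt (real (card S))) else 0)"

definition tensor :: "('s \<Rightarrow> complex) \<Rightarrow> ('g \<Rightarrow> complex) \<Rightarrow> ('s \<times> 'g \<Rightarrow> complex)" where
  "tensor u v = (\<lambda>(s, g). u s * v g)"

text \<open>U_f (|s> \<otimes> |g>) = |s> \<otimes> |f(s) g>, i.e. (U_f \<Psi>)(s, g) = \<Psi>(s, f(s)^{-1} g).\<close>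
definition Uf :: "('g, 'b) monoid_scheme \<Rightarrow> 's set \<Rightarrow> ('s \<Rightarrow> 'g) \<Rightarrow> ('s \<times> 'g \<Rightarrow> complex) \<Rightarrow> ('s \<times> 'g \<Rightarrow> complex)" where
  "Uf G S f \<Psi> = (\<lambda>(s, g). if s \<in> S \<and> g \<in> carrier G then \<Psi> (s, inv\<^bsub>G\<^esub> (f s) \<otimes>\<^bsub>G\<^esub> g) else 0)"

text \<open>(<u| \<otimes> id) \<Psi>, the partial inner product with u on the first factor.\<close>
definition partial_bra :: "'s set \<Rightarrow> ('s \<Rightarrow> complex) \<Rightarrow> ('s \<times> 'g \<Rightarrow> complex) \<Rightarrow> ('g \<Rightarrow> complex)" where
  "partial_bra S u \<Psi> = (\<lambda>g. \<Sum>s\<in>S. cnj (u s) * \<Psi> (s, g))"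

text \<open>Probability that the projective measurement of the first factor onto span(u_S)
  succeeds on state \<Psi>: ||(<u_S| \<otimes> id)\<Psi>||^2 / ||\<Psi>||^2.\<close>
definition success_prob :: "('g, 'b) monoid_scheme \<Rightarrow> 's set \<Rightarrow> ('s \<times> 'g \<Rightarrow> complex) \<Rightarrow> real" where
  "success_prob G S \<Psi> =
     (\<Sum>g\<in>carrier G. (cmod (partial_bra S (uS S) \<Psi> g))\<^sup>2) /
     (\<Sum>x\<in>S \<times> carrier G. (cmod (\<Psi> x))\<^sup>2)"

definition P_balanced :: "('g \<Rightarrow> complex mat) set \<Rightarrow> (('g \<Rightarrow> complex mat) \<Rightarrow> nat) \<Rightarrow>
    (('g \<Rightarrow> complex mat) \<Rightarrow> complex mat) \<Rightarrow> 's set \<Rightarrow> ('s \<Rightarrow> 'g) \<Rightarrow> bool" where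
  "P_balanced R dimV P S f \<longleftrightarrow>
     (\<forall>\<rho>\<in>R. msum (dimV \<rho>) (\<lambda>s. \<rho> (f s) * P \<rho>) S = 0\<^sub>m (dimV \<rho>) (dimV \<rho>))"

definition P_constant :: "('g \<Rightarrow> complex mat) set \<Rightarrow>
    (('g \<Rightarrow> complex mat) \<Rightarrow> complex mat) \<Rightarrow> 's set \<Rightarrow> ('s \<Rightarrow> 'g) \<Rightarrow> bool" where
  "P_constant R P S f \<longleftrightarrow>
     (\<forall>\<rho>\<in>R. \<exists>x. \<forall>s\<in>S. \<rho> (f s) * P \<rho> = x)"

end

theory Submission
  imports Defs
begin

(* Since
   (U_f Psi)(s, g) = Psi(s, f(s)^-1 g) and rho^dagger(M)(h) = Tr(rho(h)^dagger M), unitarity of the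
   representations gives the translation formula
       phi(f(s)^-1 g) = sum_rho c_rho Tr(rho(g^-1) rho(f(s)) P_rho).
   (a) If f is P_rho-constant the right-hand side does not depend on s, so psi factors as
       u_S (x) chi; chi is a translate of phi, hence nonzero.
   (b) If f is P_rho-balanced, summing over s gives (<u_S| (x) id) psi = 0.
   The only substantial ingredient is phi <> 0.  It follows from Schur's lemma: the matrix
   coefficients of inequivalent irreducible representations are orthogonal in C[G], so pairing
   phi with rho0^dagger(P rho0) (for some P rho0 <> 0) leaves c_rho0 * ||rho0^dagger(P rho0)||^2,
   and rho0^dagger(P rho0)(1) = Tr(P rho0) = Tr(P rho0^dagger P rho0) <> 0.
   The file develops matrix facts, Schur's lemma, the orthogonality relations, the
   non-vanishing of phi and the measurement bookkeeping, and then combines them. *)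

lemma mult_entry:
  assumes "A \<in> carrier_mat n m" "B \<in> carrier_mat m p" "i < n" "j < p"
  shows "(A * B) $$ (i,j) = (\<Sum>k<m. A $$ (i,k) * B $$ (k,j))"
  using assms by (simp add: scalar_prod_def lessThan_atLeast0)

lemma mv_entry:
  assumes "A \<in> carrier_mat n m" "v \<in> carrier_vec m" "i < n"
  shows "(A *\<^sub>v v) $ i = (\<Sum>k<m. A $$ (i,k) * v $ k)"
  using assms by (simp add: scalar_prod_def lessThan_atLeast0)

lemma mv_zero: "(T::complex mat) \<in> carrier_mat e d \<Longrightarrow> T *\<^sub>v 0\<^sub>v d = 0\<^sub>v e"
  by (intro eq_vecI) (auto simp: mv_entry)

text \<open>A matrix is determined by its action on vectors (test it on the unit vectors).\<close>
lemma mat_eq_by_action: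
  assumes A: "(A::complex mat) \<in> carrier_mat e d" and B: "B \<in> carrier_mat e d"
    and act: "\<forall>v\<in>carrier_vec d. A *\<^sub>v v = B *\<^sub>v v"
  shows "A = B"
proof (rule eq_matI)
  have col: "(M *\<^sub>v unit_vec d j) $ i = M $$ (i,j)"
    if "M \<in> carrier_mat e d" "i < e" "j < d" for M :: "complex mat" and i j
    using that by (subst mv_entry[OF that(1)]) (auto simp: unit_vec_def if_distrib cong: if_cong)
  fix i j assume "i < dim_row B" "j < dim_col B"
  then show "A $$ (i,j) = B $$ (i,j)"
    using col[OF A] col[OF B] act B by (metis carrier_matD unit_vec_carrier)
qed (use A B in auto)

lemma cadj_carrier: "U \<in> carrier_mat d d \<Longrightarrow> cadj U \<in> carrier_mat d d"
  by (auto simp: cadj_def)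

lemma mtrace_mult:
  assumes "X \<in> carrier_mat n n" "Y \<in> carrier_mat n n"
  shows "mtrace (X * Y) = (\<Sum>i<n. \<Sum>k<n. X $$ (i,k) * Y $$ (k,i))"
proof -
  have "dim_row (X * Y) = n" using assms by simp
  then show ?thesis unfolding mtrace_def
    by (simp only:) (intro sum.cong refl mult_entry[OF assms], auto)
qed

lemma mtrace_msum:
  assumes Y: "Y \<in> carrier_mat d d" and Z: "\<And>s. s \<in> S \<Longrightarrow> Z s \<in> carrier_mat d d"
  shows "(\<Sum>s\<in>S. mtrace (Y * Z s)) = mtrace (Y * msum d Z S)"
proof -
  have M: "msum d Z S \<in> carrier_mat d d" by (simp add: msum_def)
  have "(\<Sum>s\<in>S. mtrace (Y * Z s)) = (\<Sum>s\<in>S. \<Sum>i<d. \<Sum>k<d. Y $$ (i,k) * Z s $$ (k,i))"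
    by (intro sum.cong refl mtrace_mult[OF Y Z])
  also have "\<dots> = (\<Sum>i<d. \<Sum>k<d. Y $$ (i,k) * msum d Z S $$ (k,i))"
    by (simp add: msum_def sum_distrib_left sum.swap[of _ S])
  also have "\<dots> = mtrace (Y * msum d Z S)" by (rule mtrace_mult[OF Y M, symmetric])
  finally show ?thesis .
qed

lemma mtrace_gram_nonzero:
  assumes A: "A \<in> carrier_mat n n" and nz: "A \<noteq> 0\<^sub>m n n"
  shows "mtrace (cadj A * A) \<noteq> 0"
proof -
  have "mtrace (cadj A * A) = (\<Sum>i<n. \<Sum>k<n. cadj A $$ (i,k) * A $$ (k,i))"
    by (rule mtrace_mult[OF cadj_carrier[OF A] A])
  also have "\<dots> = (\<Sum>i<n. \<Sum>k<n. complex_of_real ((cmod (A $$ (k,i)))\<^sup>2))"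
    using A by (intro sum.cong refl)
      (auto simp: cadj_def complex_norm_square[of "A $$ (_,_)"] mult.commute simp del: of_real_power)
  also have "\<dots> = complex_of_real (\<Sum>i<n. \<Sum>k<n. (cmod (A $$ (k,i)))\<^sup>2)" by simp
  finally have eq: "mtrace (cadj A * A) = complex_of_real (\<Sum>i<n. \<Sum>k<n. (cmod (A $$ (k,i)))\<^sup>2)" .
  obtain k i where ki: "k < n" "i < n" "A $$ (k,i) \<noteq> 0"
    using nz A by (metis carrier_matD(1) carrier_matD(2) eq_matI index_zero_mat(1) index_zero_mat(2) index_zero_mat(3))
  have "0 < (cmod (A $$ (k,i)))\<^sup>2" using ki by simp
  also have "\<dots> \<le> (\<Sum>k<n. (cmod (A $$ (k,i)))\<^sup>2)"
    by (rule member_le_sum) (use ki in auto)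
  also have "\<dots> \<le> (\<Sum>i<n. \<Sum>k<n. (cmod (A $$ (k,i)))\<^sup>2)"
    by (rule member_le_sum[where f="\<lambda>i. \<Sum>k<n. (cmod (A $$ (k,i)))\<^sup>2"])
      (use ki in \<open>auto intro: sum_nonneg\<close>)
  finally show ?thesis unfolding eq by (simp only: of_real_eq_0_iff)
qed

section \<open>Bijective matrices are invertible\<close>

text \<open>Mutually inverse rectangular matrices are square (compare the traces of TB and BT).\<close>
lemma inverse_pair_square:
  assumes T: "(T::complex mat) \<in> carrier_mat e d" and B: "B \<in> carrier_mat d e"
    and TB: "T * B = 1\<^sub>m e" and BT: "B * T = 1\<^sub>m d"
  shows "d = e"
proof -
  have "(of_nat e :: complex) = (\<Sum>i<e. (T * B) $$ (i,i))" by (simp add: TB)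
  also have "\<dots> = (\<Sum>i<e. \<Sum>k<d. T $$ (i,k) * B $$ (k,i))"
    by (intro sum.cong refl mult_entry[OF T B]) auto
  also have "\<dots> = (\<Sum>k<d. \<Sum>i<e. B $$ (k,i) * T $$ (i,k))"
    by (subst sum.swap) (simp add: mult.commute)
  also have "\<dots> = (\<Sum>k<d. (B * T) $$ (k,k))"
    by (intro sum.cong refl mult_entry[OF B T, symmetric]) auto
  also have "\<dots> = of_nat d" by (simp add: BT)
  finally show ?thesis by simp
qed

lemma trivial_kernel_injective:
  assumes T: "(T::complex mat) \<in> carrier_mat e d"
    and ker: "{v \<in> carrier_vec d. T *\<^sub>v v = 0\<^sub>v e} = {0\<^sub>v d}"
    and x: "x \<in> carrier_vec d" and y: "y \<in> carrier_vec d" and eq: "T *\<^sub>v x = T *\<^sub>v y"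
  shows "x = y"
proof -
  have "T *\<^sub>v (x - y) = 0\<^sub>v e" using x y eq T by (simp add: mult_minus_distrib_mat_vec)
  then have "x - y \<in> {v \<in> carrier_vec d. T *\<^sub>v v = 0\<^sub>v e}" using x y by simp
  then have xy0: "x - y = 0\<^sub>v d" unfolding ker by simp
  show ?thesis
  proof (rule eq_vecI)
    fix i assume i: "i < dim_vec y"
    have "(x - y) $ i = 0" using xy0 i x y by simp
    then show "x $ i = y $ i" using i x y by simp
  qed (use x y in simp)
qed

text \<open>A surjective matrix has a right inverse: its columns are preimages of the unit vectors.\<close>
lemma surjective_right_inverse:
  assumes T: "(T::complex mat) \<in> carrier_mat e d"
    and img: "(\<lambda>v. T *\<^sub>v v) ` carrier_vec d = carrier_vec e"
  obtains B where "B \<in> carrier_mat d e" "T * B = 1\<^sub>m e"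
proof -
  have "\<forall>j. \<exists>v. j < e \<longrightarrow> v \<in> carrier_vec d \<and> T *\<^sub>v v = unit_vec e j"
    using img by (metis imageE unit_vec_carrier)
  then obtain V where V: "\<And>j. j < e \<Longrightarrow> V j \<in> carrier_vec d \<and> T *\<^sub>v V j = unit_vec e j"
    by metis
  define B where "B = mat d e (\<lambda>(i,j). V j $ i)"
  have B: "B \<in> carrier_mat d e" by (simp add: B_def)
  have "T * B = 1\<^sub>m e"
  proof (rule mat_col_eqI)
    fix j assume "j < dim_col (1\<^sub>m e :: complex mat)"
    then have j: "j < e" by simp
    have "col B j = V j" using V[OF j] j by (auto simp: B_def)
    have "col (T * B) j = T *\<^sub>v col B j" by (rule col_mult2[OF T B j])
    also have "\<dots> = T *\<^sub>v V j" using \<open>col B j = V j\<close> by simp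
    also have "\<dots> = col (1\<^sub>m e) j" using V[OF j] j by simp
    finally show "col (T * B) j = col (1\<^sub>m e) j" .
  qed (use T B in auto)
  then show ?thesis using that B by blast
qed

lemma bijective_mat_invertible:
  assumes T: "(T::complex mat) \<in> carrier_mat e d"
    and ker: "{v \<in> carrier_vec d. T *\<^sub>v v = 0\<^sub>v e} = {0\<^sub>v d}"
    and img: "(\<lambda>v. T *\<^sub>v v) ` carrier_vec d = carrier_vec e"
  shows "d = e \<and> invertible_mat T"
proof -
  obtain B where B: "B \<in> carrier_mat d e" and TB: "T * B = 1\<^sub>m e"
    using surjective_right_inverse[OF T img] by blast
  have BT: "B * T = 1\<^sub>m d"
  proof (rule mat_eq_by_action)
    show "\<forall>v\<in>carrier_vec d. (B * T) *\<^sub>v v = 1\<^sub>m d *\<^sub>v v"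
    proof
      fix v :: "complex vec" assume v: "v \<in> carrier_vec d"
      have "T *\<^sub>v ((B * T) *\<^sub>v v) = (T * (B * T)) *\<^sub>v v"
        by (rule assoc_mult_mat_vec[OF T mult_carrier_mat[OF B T] v, symmetric])
      also have "\<dots> = ((T * B) * T) *\<^sub>v v" by (simp only: assoc_mult_mat[OF T B T])
      also have "\<dots> = T *\<^sub>v v" using TB T by simp
      finally have "(B * T) *\<^sub>v v = v"
        by (rule trivial_kernel_injective[OF T ker mult_mat_vec_carrier[OF mult_carrier_mat[OF B T] v] v])
      then show "(B * T) *\<^sub>v v = 1\<^sub>m d *\<^sub>v v" using v by simp
    qed
  qed (use B T in auto)
  have "d = e" by (rule inverse_pair_square[OF T B TB BT])
  then show ?thesis
    unfolding invertible_mat_def inverts_mat_def using T B TB BT by auto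
qed

lemma rep_carrier: "unitary_rep G d \<rho> \<Longrightarrow> g \<in> carrier G \<Longrightarrow> \<rho> g \<in> carrier_mat d d"
  by (auto simp: unitary_rep_def unitary_mat_def)

text \<open>A unitary representation sends the identity to the identity matrix (rho(1) is an invertible
  idempotent).\<close>
lemma rep_one:
  assumes grp: "group G" and r: "unitary_rep G d \<rho>"
  shows "\<rho> \<one>\<^bsub>G\<^esub> = 1\<^sub>m d"
proof -
  interpret group G by (rule grp)
  let ?U = "\<rho> \<one>\<^bsub>G\<^esub>"
  have U: "?U \<in> carrier_mat d d" and uu: "cadj ?U * ?U = 1\<^sub>m d"
    using r by (auto simp: unitary_rep_def unitary_mat_def)
  have idem: "?U * ?U = ?U" using r by (metis one_closed l_one unitary_rep_def)
  have "1\<^sub>m d = cadj ?U * (?U * ?U)" using uu idem by simp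
  also have "\<dots> = (cadj ?U * ?U) * ?U" using U cadj_carrier[OF U] by simp
  also have "\<dots> = ?U" using uu U by simp
  finally show ?thesis by simp
qed

lemma rep_cadj:
  assumes grp: "group G" and r: "unitary_rep G d \<rho>" and g: "g \<in> carrier G"
  shows "cadj (\<rho> g) = \<rho> (inv\<^bsub>G\<^esub> g)"
proof -
  interpret group G by (rule grp)
  have U: "\<rho> g \<in> carrier_mat d d" and uu: "cadj (\<rho> g) * \<rho> g = 1\<^sub>m d"
    using r g by (auto simp: unitary_rep_def unitary_mat_def)
  have V: "\<rho> (inv\<^bsub>G\<^esub> g) \<in> carrier_mat d d" using rep_carrier[OF r] g by simp
  have gi: "\<rho> g * \<rho> (inv\<^bsub>G\<^esub> g) = 1\<^sub>m d"
    using r g rep_one[OF grp r] unfolding unitary_rep_def by (metis inv_closed r_inv)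
  have "cadj (\<rho> g) = (cadj (\<rho> g) * \<rho> g) * \<rho> (inv\<^bsub>G\<^esub> g)"
    using gi U V cadj_carrier[OF U] by (simp add: assoc_mult_mat[of _ d d _ d _ d])
  then show ?thesis using uu V by simp
qed

section \<open>Schur's lemma\<close>

definition invariant_subspace ::
    "('g, 'b) monoid_scheme \<Rightarrow> nat \<Rightarrow> ('g \<Rightarrow> complex mat) \<Rightarrow> complex vec set \<Rightarrow> bool" where
  "invariant_subspace G d \<rho> W \<longleftrightarrow> csubspace_vec d W \<and> (\<forall>g\<in>carrier G. \<forall>w\<in>W. \<rho> g *\<^sub>v w \<in> W)"

lemma irreducible_invariant:
  "irreducible_unitary_rep G d \<rho> \<Longrightarrow> invariant_subspace G d \<rho> W \<Longrightarrow> W = {0\<^sub>v d} \<or> W = carrier_vec d"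
  unfolding irreducible_unitary_rep_def invariant_subspace_def by blast

lemma intertwiner_kernel_invariant:
  assumes r: "unitary_rep G d \<rho>" and s: "unitary_rep G e \<sigma>" and T: "(T::complex mat) \<in> carrier_mat e d"
    and int: "\<forall>g\<in>carrier G. \<sigma> g * T = T * \<rho> g"
  shows "invariant_subspace G d \<rho> {v \<in> carrier_vec d. T *\<^sub>v v = 0\<^sub>v e}"
  unfolding invariant_subspace_def
proof (intro conjI ballI)
  show "csubspace_vec d {v \<in> carrier_vec d. T *\<^sub>v v = 0\<^sub>v e}"
    unfolding csubspace_vec_def using T
    by (auto simp: mv_zero mult_add_distrib_mat_vec mult_mat_vec)
  fix g w assume g: "g \<in> carrier G" and w: "w \<in> {v \<in> carrier_vec d. T *\<^sub>v v = 0\<^sub>v e}"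
  have rg: "\<rho> g \<in> carrier_mat d d" and sg: "\<sigma> g \<in> carrier_mat e e"
    using rep_carrier[OF r g] rep_carrier[OF s g] .
  have "T *\<^sub>v (\<rho> g *\<^sub>v w) = (\<sigma> g * T) *\<^sub>v w" using T rg w int g by auto
  also have "\<dots> = 0\<^sub>v e" using T sg w mv_zero by auto
  finally show "\<rho> g *\<^sub>v w \<in> {v \<in> carrier_vec d. T *\<^sub>v v = 0\<^sub>v e}" using w rg by auto
qed

lemma intertwiner_image_invariant:
  assumes r: "unitary_rep G d \<rho>" and s: "unitary_rep G e \<sigma>" and T: "(T::complex mat) \<in> carrier_mat e d"
    and int: "\<forall>g\<in>carrier G. \<sigma> g * T = T * \<rho> g"
  shows "invariant_subspace G e \<sigma> ((\<lambda>v. T *\<^sub>v v) ` carrier_vec d)"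
  unfolding invariant_subspace_def csubspace_vec_def
proof (intro conjI ballI allI)
  show "(*\<^sub>v) T ` carrier_vec d \<subseteq> carrier_vec e" using T by auto
  show "0\<^sub>v e \<in> (*\<^sub>v) T ` carrier_vec d" using mv_zero[OF T] by (metis image_eqI zero_carrier_vec)
next
  fix v w assume "v \<in> (*\<^sub>v) T ` carrier_vec d" "w \<in> (*\<^sub>v) T ` carrier_vec d"
  then obtain x y where "x \<in> carrier_vec d" "y \<in> carrier_vec d" "v = T *\<^sub>v x" "w = T *\<^sub>v y" by auto
  then show "v + w \<in> (*\<^sub>v) T ` carrier_vec d" using T
    by (metis add_carrier_vec image_eqI mult_add_distrib_mat_vec)
next
  fix a :: complex and v assume "v \<in> (*\<^sub>v) T ` carrier_vec d"
  then obtain x where "x \<in> carrier_vec d" "v = T *\<^sub>v x" by auto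
  then show "a \<cdot>\<^sub>v v \<in> (*\<^sub>v) T ` carrier_vec d" using T
    by (metis image_eqI mult_mat_vec smult_carrier_vec)
next
  fix g w assume g: "g \<in> carrier G" and "w \<in> (*\<^sub>v) T ` carrier_vec d"
  then obtain x where x: "x \<in> carrier_vec d" "w = T *\<^sub>v x" by auto
  have rg: "\<rho> g \<in> carrier_mat d d" and sg: "\<sigma> g \<in> carrier_mat e e"
    using rep_carrier[OF r g] rep_carrier[OF s g] .
  have "\<sigma> g *\<^sub>v w = (T * \<rho> g) *\<^sub>v x" using x T sg int g by (metis assoc_mult_mat_vec)
  also have "\<dots> = T *\<^sub>v (\<rho> g *\<^sub>v x)" using x T rg by simp
  finally show "\<sigma> g *\<^sub>v w \<in> (*\<^sub>v) T ` carrier_vec d" using x rg by auto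
qed

lemma schur:
  assumes irr_r: "irreducible_unitary_rep G d \<rho>" and irr_s: "irreducible_unitary_rep G e \<sigma>"
    and T: "(T::complex mat) \<in> carrier_mat e d" and int: "\<forall>g\<in>carrier G. \<sigma> g * T = T * \<rho> g"
    and nz: "T \<noteq> 0\<^sub>m e d"
  shows "rep_equiv G d \<rho> e \<sigma>"
proof -
  have r: "unitary_rep G d \<rho>" and s: "unitary_rep G e \<sigma>"
    using irr_r irr_s by (auto simp: irreducible_unitary_rep_def)
  have "\<exists>v\<in>carrier_vec d. T *\<^sub>v v \<noteq> 0\<^sub>v e"
  proof (rule ccontr)
    assume kills: "\<not> ?thesis"
    have "T *\<^sub>v v = 0\<^sub>m e d *\<^sub>v v" if v: "v \<in> carrier_vec d" for v
    proof -
      have "T *\<^sub>v v = 0\<^sub>v e" using v kills by blast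
      also have "\<dots> = 0\<^sub>m e d *\<^sub>v v" by (intro eq_vecI) (use v in auto)
      finally show ?thesis .
    qed
    then show False using mat_eq_by_action[OF T zero_carrier_mat] nz by blast
  qed
  then obtain v where v: "v \<in> carrier_vec d" "T *\<^sub>v v \<noteq> 0\<^sub>v e" by blast
  have "{v \<in> carrier_vec d. T *\<^sub>v v = 0\<^sub>v e} \<noteq> carrier_vec d" using v by auto
  then have "{v \<in> carrier_vec d. T *\<^sub>v v = 0\<^sub>v e} = {0\<^sub>v d}"
    using irreducible_invariant[OF irr_r intertwiner_kernel_invariant[OF r s T int]] by meson
  moreover have "(\<lambda>v. T *\<^sub>v v) ` carrier_vec d \<noteq> {0\<^sub>v e}" using v by (metis image_eqI singletonD)
  then have "(\<lambda>v. T *\<^sub>v v) ` carrier_vec d = carrier_vec e"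
    using irreducible_invariant[OF irr_s intertwiner_image_invariant[OF r s T int]] by meson
  ultimately have "d = e \<and> invertible_mat T" by (rule bijective_mat_invertible[OF T])
  then show ?thesis unfolding rep_equiv_def using T int by metis
qed

section \<open>Schur orthogonality\<close>

text \<open>Averaging the matrix unit E_bc over G, h |-> sigma(h) E_bc rho(h^-1), gives an intertwiner
  from rho to sigma; here it is written entrywise.\<close>
lemma averaged_intertwiner:
  assumes grp: "group G" and ur: "unitary_rep G d \<rho>" and us: "unitary_rep G e \<sigma>"
    and b: "b < e" and c: "c < d"
    and T_def: "T = mat e d (\<lambda>(x,z). \<Sum>h\<in>carrier G. \<sigma> h $$ (x,b) * \<rho> (inv\<^bsub>G\<^esub> h) $$ (c,z))"
  shows "\<forall>g\<in>carrier G. \<sigma> g * T = T * \<rho> g"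
proof
  interpret group G by (rule grp)
  fix g assume g: "g \<in> carrier G"
  have rc: "\<And>h. h \<in> carrier G \<Longrightarrow> \<rho> h \<in> carrier_mat d d" by (rule rep_carrier[OF ur])
  have sc: "\<And>h. h \<in> carrier G \<Longrightarrow> \<sigma> h \<in> carrier_mat e e" by (rule rep_carrier[OF us])
  have T: "T \<in> carrier_mat e d" by (simp add: T_def)
  show "\<sigma> g * T = T * \<rho> g"
  proof (rule eq_matI)
    fix x z assume "x < dim_row (T * \<rho> g)" "z < dim_col (T * \<rho> g)"
    then have x: "x < e" and z: "z < d" using T rc[OF g] by auto
    have "(\<sigma> g * T) $$ (x,z) = (\<Sum>k<e. \<sigma> g $$ (x,k) * (\<Sum>h\<in>carrier G. \<sigma> h $$ (k,b) * \<rho> (inv\<^bsub>G\<^esub> h) $$ (c,z)))"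
      using mult_entry[OF sc[OF g] T x z] x z by (simp add: T_def)
    also have "\<dots> = (\<Sum>h\<in>carrier G. (\<Sum>k<e. \<sigma> g $$ (x,k) * \<sigma> h $$ (k,b)) * \<rho> (inv\<^bsub>G\<^esub> h) $$ (c,z))"
      unfolding sum_distrib_left sum_distrib_right mult.assoc by (rule sum.swap)
    also have "\<dots> = (\<Sum>h\<in>carrier G. \<sigma> (g \<otimes>\<^bsub>G\<^esub> h) $$ (x,b) * \<rho> (inv\<^bsub>G\<^esub> h) $$ (c,z))"
      using us g b by (intro sum.cong refl) (simp add: unitary_rep_def mult_entry[OF sc[OF g] sc x b])
    also have "\<dots> = (\<Sum>h\<in>carrier G. \<sigma> (g \<otimes>\<^bsub>G\<^esub> h) $$ (x,b) * \<rho> (inv\<^bsub>G\<^esub> (g \<otimes>\<^bsub>G\<^esub> h) \<otimes>\<^bsub>G\<^esub> g) $$ (c,z))"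
      by (intro sum.cong refl) (simp add: g inv_mult_group m_assoc)
    also have "\<dots> = (\<Sum>h\<in>carrier G. \<sigma> h $$ (x,b) * \<rho> (inv\<^bsub>G\<^esub> h \<otimes>\<^bsub>G\<^esub> g) $$ (c,z))"
      by (rule sym, rule sum.reindex_bij_witness[of _ "\<lambda>h. g \<otimes>\<^bsub>G\<^esub> h" "\<lambda>h. inv\<^bsub>G\<^esub> g \<otimes>\<^bsub>G\<^esub> h"])
         (auto simp: g m_assoc[symmetric])
    also have "\<dots> = (\<Sum>h\<in>carrier G. \<sigma> h $$ (x,b) * (\<Sum>k<d. \<rho> (inv\<^bsub>G\<^esub> h) $$ (c,k) * \<rho> g $$ (k,z)))"
      using ur g c by (intro sum.cong refl) (simp add: unitary_rep_def mult_entry[OF rc rc[OF g] c z])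
    also have "\<dots> = (\<Sum>k<d. (\<Sum>h\<in>carrier G. \<sigma> h $$ (x,b) * \<rho> (inv\<^bsub>G\<^esub> h) $$ (c,k)) * \<rho> g $$ (k,z))"
      unfolding sum_distrib_left sum_distrib_right mult.assoc by (rule sum.swap)
    also have "\<dots> = (T * \<rho> g) $$ (x,z)"
      using mult_entry[OF T rc[OF g] x z] x by (simp add: T_def)
    finally show "(\<sigma> g * T) $$ (x,z) = (T * \<rho> g) $$ (x,z)" .
  qed (use T sc[OF g] rc[OF g] in auto)
qed

lemma schur_orthogonality:
  assumes grp: "group G"
    and irr_r: "irreducible_unitary_rep G d \<rho>" and irr_s: "irreducible_unitary_rep G e \<sigma>"
    and ineq: "\<not> rep_equiv G d \<rho> e \<sigma>"
    and ab: "a < e" "b < e" and cy: "c < d" "y < d"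
  shows "(\<Sum>h\<in>carrier G. \<sigma> h $$ (a,b) * \<rho> (inv\<^bsub>G\<^esub> h) $$ (c,y)) = 0"
proof -
  define T where "T = mat e d (\<lambda>(x,z). \<Sum>h\<in>carrier G. \<sigma> h $$ (x,b) * \<rho> (inv\<^bsub>G\<^esub> h) $$ (c,z))"
  have T: "T \<in> carrier_mat e d" by (simp add: T_def)
  have "\<forall>g\<in>carrier G. \<sigma> g * T = T * \<rho> g"
    using irr_r irr_s ab cy
    by (intro averaged_intertwiner[OF grp _ _ _ _ T_def]) (auto simp: irreducible_unitary_rep_def)
  then have "T = 0\<^sub>m e d" using schur[OF irr_r irr_s T] ineq by blast
  then have "T $$ (a,y) = 0" using ab cy by simp
  then show ?thesis using ab cy by (simp add: T_def)
qed

lemma rho_dag_orthogonal: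
  assumes grp: "group G"
    and irr_r: "irreducible_unitary_rep G d \<rho>" and irr_s: "irreducible_unitary_rep G e \<sigma>"
    and ineq: "\<not> rep_equiv G d \<rho> e \<sigma>"
    and A: "A \<in> carrier_mat e e" and B: "B \<in> carrier_mat d d"
  shows "(\<Sum>h\<in>carrier G. cnj (rho_dag G \<sigma> A h) * rho_dag G \<rho> B h) = 0"
proof -
  have ur: "unitary_rep G d \<rho>" and us: "unitary_rep G e \<sigma>"
    using irr_r irr_s by (auto simp: irreducible_unitary_rep_def)
  have e1: "cnj (rho_dag G \<sigma> A h) = (\<Sum>i<e. \<Sum>k<e. \<sigma> h $$ (k,i) * cnj (A $$ (k,i)))"
    if h: "h \<in> carrier G" for h
  proof -
    have sc: "\<sigma> h \<in> carrier_mat e e" by (rule rep_carrier[OF us h])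
    have "rho_dag G \<sigma> A h = (\<Sum>i<e. \<Sum>k<e. cadj (\<sigma> h) $$ (i,k) * A $$ (k,i))"
      using h mtrace_mult[OF cadj_carrier[OF sc] A] by (simp add: rho_dag_def)
    also have "\<dots> = (\<Sum>i<e. \<Sum>k<e. cnj (\<sigma> h $$ (k,i)) * A $$ (k,i))"
      using sc by (intro sum.cong refl) (simp add: cadj_def)
    finally show ?thesis by simp
  qed
  have e2: "rho_dag G \<rho> B h = (\<Sum>j<d. \<Sum>l<d. \<rho> (inv\<^bsub>G\<^esub> h) $$ (j,l) * B $$ (l,j))"
    if h: "h \<in> carrier G" for h
    using h mtrace_mult[OF cadj_carrier[OF rep_carrier[OF ur h]] B] rep_cadj[OF grp ur h]
    by (simp add: rho_dag_def)
  have coeff: "(\<Sum>h\<in>carrier G. \<sigma> h $$ (k,i) * \<rho> (inv\<^bsub>G\<^esub> h) $$ (j,l)) = 0"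
    if "k < e" "i < e" "j < d" "l < d" for i k j l
    using schur_orthogonality[OF grp irr_r irr_s ineq] that by blast
  have "(\<Sum>h\<in>carrier G. cnj (rho_dag G \<sigma> A h) * rho_dag G \<rho> B h)
     = (\<Sum>h\<in>carrier G. \<Sum>j<d. \<Sum>i<e. \<Sum>l<d. \<Sum>k<e.
          (\<sigma> h $$ (k,i) * \<rho> (inv\<^bsub>G\<^esub> h) $$ (j,l)) * (cnj (A $$ (k,i)) * B $$ (l,j)))"
    by (intro sum.cong refl) (simp add: e1 e2 sum_distrib_left sum_distrib_right mult_ac)
  also have "\<dots> = (\<Sum>j<d. \<Sum>i<e. \<Sum>l<d. \<Sum>k<e.
          (\<Sum>h\<in>carrier G. \<sigma> h $$ (k,i) * \<rho> (inv\<^bsub>G\<^esub> h) $$ (j,l)) * (cnj (A $$ (k,i)) * B $$ (l,j)))"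
    by (simp only: sum.swap[of _ "carrier G"] sum_distrib_right)
  also have "\<dots> = 0" by (simp add: coeff)
  finally show ?thesis .
qed

section \<open>The state phi is nonzero\<close>

definition phi_state :: "('g, 'b) monoid_scheme \<Rightarrow> ('g \<Rightarrow> complex mat) set \<Rightarrow>
    (('g \<Rightarrow> complex mat) \<Rightarrow> complex) \<Rightarrow> (('g \<Rightarrow> complex mat) \<Rightarrow> complex mat) \<Rightarrow> 'g \<Rightarrow> complex" where
  "phi_state G R c P = (\<lambda>h. \<Sum>\<rho>\<in>R. c \<rho> * rho_dag G \<rho> (P \<rho>) h)"

text \<open>rho^dagger(P)(1) = Tr(P) = Tr(P^dagger P), which is nonzero for a nonzero projector.\<close>
lemma rho_dag_projector_at_one:
  assumes grp: "group G" and ur: "unitary_rep G d \<rho>"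
    and proj: "orth_projector d P" and nz: "P \<noteq> 0\<^sub>m d d"
  shows "rho_dag G \<rho> P \<one>\<^bsub>G\<^esub> \<noteq> 0"
proof -
  interpret group G by (rule grp)
  have Pc: "P \<in> carrier_mat d d" using proj by (simp add: orth_projector_def)
  have "cadj (\<rho> \<one>\<^bsub>G\<^esub>) = 1\<^sub>m d" using rep_cadj[OF grp ur one_closed] rep_one[OF grp ur] by simp
  then have "rho_dag G \<rho> P \<one>\<^bsub>G\<^esub> = mtrace P" using Pc by (simp add: rho_dag_def)
  also have "\<dots> = mtrace (cadj P * P)" using proj by (simp add: orth_projector_def)
  finally show ?thesis using mtrace_gram_nonzero[OF Pc nz] by simp
qed

text \<open>Pairing phi with rho0^dagger(P rho0) in C[G]: by orthogonality only the rho0 summand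
  survives, contributing c_rho0 times the squared norm of rho0^dagger(P rho0).\<close>
lemma phi_state_pairing:
  assumes grp: "group G" and irreps: "complete_irreps G R dimV" and finR: "finite R"
    and Pc: "\<forall>\<rho>\<in>R. P \<rho> \<in> carrier_mat (dimV \<rho>) (dimV \<rho>)" and r0: "\<rho>0 \<in> R"
  shows "(\<Sum>h\<in>carrier G. cnj (rho_dag G \<rho>0 (P \<rho>0) h) * phi_state G R c P h)
           = c \<rho>0 * complex_of_real (\<Sum>h\<in>carrier G. (cmod (rho_dag G \<rho>0 (P \<rho>0) h))\<^sup>2)"
proof -
  have irr: "\<And>\<rho>. \<rho> \<in> R \<Longrightarrow> irreducible_unitary_rep G (dimV \<rho>) \<rho>"
    using irreps by (simp add: complete_irreps_def)
  define Q where "Q = (\<lambda>\<rho>. \<Sum>h\<in>carrier G. cnj (rho_dag G \<rho>0 (P \<rho>0) h) * rho_dag G \<rho> (P \<rho>) h)"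
  have "(\<Sum>h\<in>carrier G. cnj (rho_dag G \<rho>0 (P \<rho>0) h) * phi_state G R c P h) = (\<Sum>\<rho>\<in>R. c \<rho> * Q \<rho>)"
    unfolding Q_def phi_state_def sum_distrib_left
    by (subst sum.swap) (simp add: mult_ac)
  also have "\<dots> = c \<rho>0 * Q \<rho>0 + (\<Sum>\<rho>\<in>R - {\<rho>0}. c \<rho> * Q \<rho>)"
    by (rule sum.remove[OF finR r0])
  also have "(\<Sum>\<rho>\<in>R - {\<rho>0}. c \<rho> * Q \<rho>) = 0"
  proof (rule sum.neutral, rule ballI)
    fix \<rho> assume r: "\<rho> \<in> R - {\<rho>0}"
    then have "\<not> rep_equiv G (dimV \<rho>) \<rho> (dimV \<rho>0) \<rho>0"
      using irreps r0 unfolding complete_irreps_def by blast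
    then have "Q \<rho> = 0" unfolding Q_def
      using rho_dag_orthogonal[OF grp irr irr[OF r0]] Pc r r0 by blast
    then show "c \<rho> * Q \<rho> = 0" by simp
  qed
  also have "Q \<rho>0 = complex_of_real (\<Sum>h\<in>carrier G. (cmod (rho_dag G \<rho>0 (P \<rho>0) h))\<^sup>2)"
    unfolding Q_def by (simp add: complex_norm_square mult.commute del: of_real_power)
  finally show ?thesis by simp
qed

text \<open>phi is nonzero: its pairing with rho0^dagger(P rho0) is c_rho0 times a positive number,
  positivity coming from the value Tr(P rho0) <> 0 at the identity.\<close>
lemma phi_state_nonzero:
  assumes grp: "group G" and finG: "finite (carrier G)" and irreps: "complete_irreps G R dimV"
    and finR: "finite R"
    and proj: "\<forall>\<rho>\<in>R. orth_projector (dimV \<rho>) (P \<rho>)"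
    and Pnz: "\<exists>\<rho>\<in>R. P \<rho> \<noteq> 0\<^sub>m (dimV \<rho>) (dimV \<rho>)"
    and cnz: "\<forall>\<rho>\<in>R. c \<rho> \<noteq> 0"
  shows "\<exists>h\<in>carrier G. phi_state G R c P h \<noteq> 0"
proof (rule ccontr)
  assume "\<not> ?thesis"
  then have zero: "\<And>h. h \<in> carrier G \<Longrightarrow> phi_state G R c P h = 0" by blast
  obtain \<rho>0 where r0: "\<rho>0 \<in> R" and P0: "P \<rho>0 \<noteq> 0\<^sub>m (dimV \<rho>0) (dimV \<rho>0)" using Pnz by blast
  have Pc: "\<forall>\<rho>\<in>R. P \<rho> \<in> carrier_mat (dimV \<rho>) (dimV \<rho>)"
    using proj by (auto simp: orth_projector_def)
  have ur0: "unitary_rep G (dimV \<rho>0) \<rho>0"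
    using irreps r0 by (simp add: complete_irreps_def irreducible_unitary_rep_def)
  let ?\<psi>0 = "rho_dag G \<rho>0 (P \<rho>0)"
  have one: "\<one>\<^bsub>G\<^esub> \<in> carrier G" using grp by (simp add: group.is_monoid monoid.one_closed)
  have "0 < (cmod (?\<psi>0 \<one>\<^bsub>G\<^esub>))\<^sup>2"
    using rho_dag_projector_at_one[OF grp ur0 _ P0] proj r0 by simp
  also have "\<dots> \<le> (\<Sum>h\<in>carrier G. (cmod (?\<psi>0 h))\<^sup>2)"
    by (rule member_le_sum[OF one]) (auto simp: finG)
  finally have "complex_of_real (\<Sum>h\<in>carrier G. (cmod (?\<psi>0 h))\<^sup>2) \<noteq> 0"
    by (simp only: of_real_eq_0_iff)
  then have "c \<rho>0 * complex_of_real (\<Sum>h\<in>carrier G. (cmod (?\<psi>0 h))\<^sup>2) \<noteq> 0"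
    using cnz r0 by (metis mult_eq_0_iff)
  moreover have "(\<Sum>h\<in>carrier G. cnj (?\<psi>0 h) * phi_state G R c P h) = 0" by (simp add: zero)
  ultimately show False using phi_state_pairing[OF grp irreps finR Pc r0] by simp
qed

section \<open>Translates of phi\<close>

lemma rho_dag_translate:
  assumes grp: "group G" and ur: "unitary_rep G d \<rho>" and a: "a \<in> carrier G" and g: "g \<in> carrier G"
    and M: "M \<in> carrier_mat d d"
  shows "rho_dag G \<rho> M (inv\<^bsub>G\<^esub> a \<otimes>\<^bsub>G\<^esub> g) = mtrace (\<rho> (inv\<^bsub>G\<^esub> g) * (\<rho> a * M))"
proof -
  interpret group G by (rule grp)
  have x: "inv\<^bsub>G\<^esub> a \<otimes>\<^bsub>G\<^esub> g \<in> carrier G" using a g by simp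
  have "rho_dag G \<rho> M (inv\<^bsub>G\<^esub> a \<otimes>\<^bsub>G\<^esub> g) = mtrace (\<rho> (inv\<^bsub>G\<^esub> g \<otimes>\<^bsub>G\<^esub> a) * M)"
    using x rep_cadj[OF grp ur x] a g by (simp add: rho_dag_def inv_mult_group)
  also have "\<rho> (inv\<^bsub>G\<^esub> g \<otimes>\<^bsub>G\<^esub> a) = \<rho> (inv\<^bsub>G\<^esub> g) * \<rho> a"
    using ur a g by (simp add: unitary_rep_def)
  also have "\<rho> (inv\<^bsub>G\<^esub> g) * \<rho> a * M = \<rho> (inv\<^bsub>G\<^esub> g) * (\<rho> a * M)"
    using rep_carrier[OF ur a] rep_carrier[OF ur, of "inv\<^bsub>G\<^esub> g"] g M by simp
  finally show ?thesis .
qed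

lemma phi_state_translate:
  assumes grp: "group G" and ur: "\<forall>\<rho>\<in>R. unitary_rep G (dimV \<rho>) \<rho>"
    and Pc: "\<forall>\<rho>\<in>R. P \<rho> \<in> carrier_mat (dimV \<rho>) (dimV \<rho>)"
    and a: "a \<in> carrier G" and g: "g \<in> carrier G"
  shows "phi_state G R c P (inv\<^bsub>G\<^esub> a \<otimes>\<^bsub>G\<^esub> g)
           = (\<Sum>\<rho>\<in>R. c \<rho> * mtrace (\<rho> (inv\<^bsub>G\<^esub> g) * (\<rho> a * P \<rho>)))"
  unfolding phi_state_def
proof (intro sum.cong refl)
  fix \<rho> assume r: "\<rho> \<in> R"
  show "c \<rho> * rho_dag G \<rho> (P \<rho>) (inv\<^bsub>G\<^esub> a \<otimes>\<^bsub>G\<^esub> g)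
      = c \<rho> * mtrace (\<rho> (inv\<^bsub>G\<^esub> g) * (\<rho> a * P \<rho>))"
    using rho_dag_translate[OF grp _ a g] ur Pc r by metis
qed

lemma constant_translates_agree:
  assumes grp: "group G" and ur: "\<forall>\<rho>\<in>R. unitary_rep G (dimV \<rho>) \<rho>"
    and Pc: "\<forall>\<rho>\<in>R. P \<rho> \<in> carrier_mat (dimV \<rho>) (dimV \<rho>)"
    and f_into: "\<forall>s\<in>S. f s \<in> carrier G" and const: "P_constant R P S f"
    and s: "s \<in> S" and s0: "s0 \<in> S" and g: "g \<in> carrier G"
  shows "phi_state G R c P (inv\<^bsub>G\<^esub> (f s) \<otimes>\<^bsub>G\<^esub> g) = phi_state G R c P (inv\<^bsub>G\<^esub> (f s0) \<otimes>\<^bsub>G\<^esub> g)"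
proof -
  have same: "\<rho> (f s) * P \<rho> = \<rho> (f s0) * P \<rho>" if "\<rho> \<in> R" for \<rho>
    using const that s s0 unfolding P_constant_def by metis
  have "phi_state G R c P (inv\<^bsub>G\<^esub> (f s) \<otimes>\<^bsub>G\<^esub> g)
      = (\<Sum>\<rho>\<in>R. c \<rho> * mtrace (\<rho> (inv\<^bsub>G\<^esub> g) * (\<rho> (f s) * P \<rho>)))"
    using f_into s by (intro phi_state_translate[OF grp ur Pc _ g]) blast
  also have "\<dots> = (\<Sum>\<rho>\<in>R. c \<rho> * mtrace (\<rho> (inv\<^bsub>G\<^esub> g) * (\<rho> (f s0) * P \<rho>)))"
    by (intro sum.cong refl) (simp add: same)
  also have "\<dots> = phi_state G R c P (inv\<^bsub>G\<^esub> (f s0) \<otimes>\<^bsub>G\<^esub> g)"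
    using f_into s0 by (intro phi_state_translate[OF grp ur Pc _ g, symmetric]) blast
  finally show ?thesis .
qed

lemma balanced_translates_vanish:
  assumes grp: "group G" and ur: "\<forall>\<rho>\<in>R. unitary_rep G (dimV \<rho>) \<rho>"
    and Pc: "\<forall>\<rho>\<in>R. P \<rho> \<in> carrier_mat (dimV \<rho>) (dimV \<rho>)"
    and f_into: "\<forall>s\<in>S. f s \<in> carrier G" and bal: "P_balanced R dimV P S f"
    and g: "g \<in> carrier G"
  shows "(\<Sum>s\<in>S. phi_state G R c P (inv\<^bsub>G\<^esub> (f s) \<otimes>\<^bsub>G\<^esub> g)) = 0"
proof -
  have ig: "inv\<^bsub>G\<^esub> g \<in> carrier G" using grp g by simp
  have vanish: "(\<Sum>s\<in>S. mtrace (\<rho> (inv\<^bsub>G\<^esub> g) * (\<rho> (f s) * P \<rho>))) = 0" if r: "\<rho> \<in> R" for \<rho>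
  proof -
    have rc: "\<And>h. h \<in> carrier G \<Longrightarrow> \<rho> h \<in> carrier_mat (dimV \<rho>) (dimV \<rho>)"
      using rep_carrier[of G "dimV \<rho>" \<rho>] ur r by blast
    have "(\<Sum>s\<in>S. mtrace (\<rho> (inv\<^bsub>G\<^esub> g) * (\<rho> (f s) * P \<rho>)))
        = mtrace (\<rho> (inv\<^bsub>G\<^esub> g) * msum (dimV \<rho>) (\<lambda>s. \<rho> (f s) * P \<rho>) S)"
      using f_into Pc r by (intro mtrace_msum[OF rc[OF ig]] mult_carrier_mat[OF rc]) auto
    also have "\<dots> = mtrace (\<rho> (inv\<^bsub>G\<^esub> g) * 0\<^sub>m (dimV \<rho>) (dimV \<rho>))"
      using bal r by (simp add: P_balanced_def)
    also have "\<dots> = 0" using rc[OF ig] by (subst mtrace_mult[of _ "dimV \<rho>"]) auto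
    finally show ?thesis .
  qed
  have "(\<Sum>s\<in>S. phi_state G R c P (inv\<^bsub>G\<^esub> (f s) \<otimes>\<^bsub>G\<^esub> g))
      = (\<Sum>s\<in>S. \<Sum>\<rho>\<in>R. c \<rho> * mtrace (\<rho> (inv\<^bsub>G\<^esub> g) * (\<rho> (f s) * P \<rho>)))"
    using f_into by (intro sum.cong refl phi_state_translate[OF grp ur Pc _ g]) blast
  also have "\<dots> = (\<Sum>\<rho>\<in>R. c \<rho> * (\<Sum>s\<in>S. mtrace (\<rho> (inv\<^bsub>G\<^esub> g) * (\<rho> (f s) * P \<rho>))))"
    by (subst sum.swap) (simp only: sum_distrib_left)
  also have "\<dots> = 0" by (rule sum.neutral) (simp add: vanish)
  finally show ?thesis .
qed

section \<open>The measurement on the first factor\<close>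

lemma uS_square:
  assumes "finite S" "S \<noteq> {}" "s \<in> S"
  shows "cnj (uS S s) * uS S s = 1 / of_nat (card S)"
    and "(cmod (uS S s))\<^sup>2 = 1 / real (card S)"
proof -
  have n: "card S > 0" using assms card_gt_0_iff by blast
  define r where "r = 1 / sqrt (real (card S))"
  have u: "uS S s = complex_of_real r" by (simp add: uS_def assms r_def)
  have rr: "r * r = 1 / real (card S)" using n by (simp add: r_def)
  have "cnj (uS S s) * uS S s = complex_of_real (r * r)"
    unfolding u by (simp only: complex_cnj_complex_of_real of_real_mult)
  then show "cnj (uS S s) * uS S s = 1 / of_nat (card S)" unfolding rr by simp
  have "cmod (uS S s) = \<bar>r\<bar>" unfolding u by (simp only: norm_of_real)
  then show "(cmod (uS S s))\<^sup>2 = 1 / real (card S)" using rr by (simp add: power2_eq_square)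
qed

lemma uS_normalized:
  assumes "finite S" "S \<noteq> {}"
  shows "(\<Sum>s\<in>S. cnj (uS S s) * uS S s) = 1"
    and "(\<Sum>s\<in>S. (cmod (uS S s))\<^sup>2) = 1"
  using uS_square[OF assms] assms by simp_all

lemma partial_bra_Uf:
  assumes "finite S" "S \<noteq> {}" and g: "g \<in> carrier G"
  shows "partial_bra S (uS S) (Uf G S f (tensor (uS S) \<phi>)) g
           = 1 / of_nat (card S) * (\<Sum>s\<in>S. \<phi> (inv\<^bsub>G\<^esub> (f s) \<otimes>\<^bsub>G\<^esub> g))"
  unfolding partial_bra_def sum_distrib_left
  by (intro sum.cong refl) (simp add: Uf_def tensor_def g mult.assoc[symmetric] uS_square(1)[OF assms(1,2)])

lemma Uf_tensor_factorizes:
  assumes s0: "s0 \<in> S"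
    and same: "\<And>s g. s \<in> S \<Longrightarrow> g \<in> carrier G \<Longrightarrow>
                 \<phi> (inv\<^bsub>G\<^esub> (f s) \<otimes>\<^bsub>G\<^esub> g) = \<phi> (inv\<^bsub>G\<^esub> (f s0) \<otimes>\<^bsub>G\<^esub> g)"
  shows "Uf G S f (tensor (uS S) \<phi>)
           = tensor (uS S) (\<lambda>g. if g \<in> carrier G then \<phi> (inv\<^bsub>G\<^esub> (f s0) \<otimes>\<^bsub>G\<^esub> g) else 0)"
  by (auto simp: fun_eq_iff Uf_def tensor_def uS_def same)

lemma partial_bra_tensor:
  assumes "finite S" "S \<noteq> {}"
  shows "partial_bra S (uS S) (tensor (uS S) \<chi>) = \<chi>"
  using uS_normalized(1)[OF assms]
  by (simp add: fun_eq_iff partial_bra_def tensor_def sum_distrib_right[symmetric] mult.assoc[symmetric])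

lemma success_prob_tensor:
  assumes finS: "finite S" and neS: "S \<noteq> {}" and finG: "finite (carrier G)"
    and nz: "\<exists>g\<in>carrier G. \<chi> g \<noteq> 0"
  shows "success_prob G S (tensor (uS S) \<chi>) = 1"
proof -
  have "(\<Sum>x\<in>S \<times> carrier G. (cmod (tensor (uS S) \<chi> x))\<^sup>2)
      = (\<Sum>s\<in>S. \<Sum>g\<in>carrier G. (cmod (uS S s))\<^sup>2 * (cmod (\<chi> g))\<^sup>2)"
    unfolding sum.cartesian_product tensor_def
    by (intro sum.cong refl) (auto simp: norm_mult power_mult_distrib)
  also have "\<dots> = (\<Sum>s\<in>S. (cmod (uS S s))\<^sup>2) * (\<Sum>g\<in>carrier G. (cmod (\<chi> g))\<^sup>2)"
    by (rule sum_product[symmetric])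
  also have "\<dots> = (\<Sum>g\<in>carrier G. (cmod (\<chi> g))\<^sup>2)" by (simp add: uS_normalized(2)[OF finS neS])
  finally have norm: "(\<Sum>x\<in>S \<times> carrier G. (cmod (tensor (uS S) \<chi> x))\<^sup>2) = (\<Sum>g\<in>carrier G. (cmod (\<chi> g))\<^sup>2)" .
  obtain g where g: "g \<in> carrier G" "\<chi> g \<noteq> 0" using nz by blast
  have "0 < (cmod (\<chi> g))\<^sup>2" using g by simp
  also have "\<dots> \<le> (\<Sum>g\<in>carrier G. (cmod (\<chi> g))\<^sup>2)"
    by (rule member_le_sum[OF g(1)]) (auto simp: finG)
  finally show ?thesis
    unfolding success_prob_def partial_bra_tensor[OF finS neS] norm by simp
qed

text \<open>(a) For P_rho-constant f the output is u_S (x) chi with chi a nonzero translate of phi.\<close>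
lemma constant_case:
  assumes grp: "group G" and finG: "finite (carrier G)" and finS: "finite S" and neS: "S \<noteq> {}"
    and f_into: "\<forall>s\<in>S. f s \<in> carrier G"
    and irreps: "complete_irreps G R dimV" and finR: "finite R"
    and proj: "\<forall>\<rho>\<in>R. orth_projector (dimV \<rho>) (P \<rho>)"
    and Pnz: "\<exists>\<rho>\<in>R. P \<rho> \<noteq> 0\<^sub>m (dimV \<rho>) (dimV \<rho>)"
    and cnz: "\<forall>\<rho>\<in>R. c \<rho> \<noteq> 0"
    and const: "P_constant R P S f"
  shows "(\<exists>\<chi>. (\<exists>g\<in>carrier G. \<chi> g \<noteq> 0) \<and>
            Uf G S f (tensor (uS S) (phi_state G R c P)) = tensor (uS S) \<chi>) \<and>
         success_prob G S (Uf G S f (tensor (uS S) (phi_state G R c P))) = 1"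
proof -
  interpret group G by (rule grp)
  have ur: "\<forall>\<rho>\<in>R. unitary_rep G (dimV \<rho>) \<rho>"
    using irreps by (auto simp: complete_irreps_def irreducible_unitary_rep_def)
  have Pc: "\<forall>\<rho>\<in>R. P \<rho> \<in> carrier_mat (dimV \<rho>) (dimV \<rho>)"
    using proj by (auto simp: orth_projector_def)
  obtain s0 where s0: "s0 \<in> S" using neS by blast
  define \<chi> where "\<chi> = (\<lambda>g. if g \<in> carrier G then phi_state G R c P (inv\<^bsub>G\<^esub> (f s0) \<otimes>\<^bsub>G\<^esub> g) else 0)"
  have factor: "Uf G S f (tensor (uS S) (phi_state G R c P)) = tensor (uS S) \<chi>"
    unfolding \<chi>_def
    by (intro Uf_tensor_factorizes[OF s0] constant_translates_agree[OF grp ur Pc f_into const _ s0])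
  obtain h where h: "h \<in> carrier G" "phi_state G R c P h \<noteq> 0"
    using phi_state_nonzero[OF grp finG irreps finR proj Pnz cnz] by blast
  have fs0: "f s0 \<in> carrier G" using f_into s0 by blast
  have "\<chi> (f s0 \<otimes>\<^bsub>G\<^esub> h) = phi_state G R c P h"
    using fs0 h(1) by (simp add: \<chi>_def m_assoc[symmetric])
  then have nz: "\<exists>g\<in>carrier G. \<chi> g \<noteq> 0" using h fs0 by (metis m_closed)
  show ?thesis using factor nz success_prob_tensor[OF finS neS finG nz] by auto
qed

lemma balanced_case:
  assumes grp: "group G" and finS: "finite S" and neS: "S \<noteq> {}"
    and f_into: "\<forall>s\<in>S. f s \<in> carrier G"
    and irreps: "complete_irreps G R dimV"
    and proj: "\<forall>\<rho>\<in>R. orth_projector (dimV \<rho>) (P \<rho>)"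
    and bal: "P_balanced R dimV P S f"
  shows "partial_bra S (uS S) (Uf G S f (tensor (uS S) (phi_state G R c P))) = (\<lambda>g. 0) \<and>
         success_prob G S (Uf G S f (tensor (uS S) (phi_state G R c P))) = 0"
proof -
  have ur: "\<forall>\<rho>\<in>R. unitary_rep G (dimV \<rho>) \<rho>"
    using irreps by (auto simp: complete_irreps_def irreducible_unitary_rep_def)
  have Pc: "\<forall>\<rho>\<in>R. P \<rho> \<in> carrier_mat (dimV \<rho>) (dimV \<rho>)"
    using proj by (auto simp: orth_projector_def)
  have "partial_bra S (uS S) (Uf G S f (tensor (uS S) (phi_state G R c P))) g = 0" for g
  proof (cases "g \<in> carrier G")
    case True
    then show ?thesis
      using partial_bra_Uf[OF finS neS True] balanced_translates_vanish[OF grp ur Pc f_into bal True]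
      by simp
  next
    case False
    then show ?thesis by (simp add: partial_bra_def Uf_def)
  qed
  then show ?thesis by (simp add: fun_eq_iff success_prob_def)
qed

theorem mainTheorem7:
  fixes G :: "('g, 'b) monoid_scheme"
    and S :: "'s set"
    and f :: "'s \<Rightarrow> 'g"
    and R :: "('g \<Rightarrow> complex mat) set"
    and dimV :: "('g \<Rightarrow> complex mat) \<Rightarrow> nat"
    and P :: "('g \<Rightarrow> complex mat) \<Rightarrow> complex mat"
    and c :: "('g \<Rightarrow> complex mat) \<Rightarrow> complex"
  assumes grp: "group G"
    and finG: "finite (carrier G)"
    and finS: "finite S"
    and neS: "S \<noteq> {}"
    and f_into: "\<forall>s\<in>S. f s \<in> carrier G"
    and irreps: "complete_irreps G R dimV"
    and finR: "finite R"
    and proj: "\<forall>\<rho>\<in>R. orth_projector (dimV \<rho>) (P \<rho>)"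
    and Pnz: "\<exists>\<rho>\<in>R. P \<rho> \<noteq> 0\<^sub>m (dimV \<rho>) (dimV \<rho>)"
    and cnz: "\<forall>\<rho>\<in>R. c \<rho> \<noteq> 0"
  defines "\<psi> \<equiv> Uf G S f (tensor (uS S) (\<lambda>h. \<Sum>\<rho>\<in>R. c \<rho> * rho_dag G \<rho> (P \<rho>) h))"
  shows "(P_constant R P S f \<longrightarrow>
            (\<exists>\<chi>. (\<exists>g\<in>carrier G. \<chi> g \<noteq> 0) \<and> \<psi> = tensor (uS S) \<chi>) \<and>
            success_prob G S \<psi> = 1)
       \<and> (P_balanced R dimV P S f \<longrightarrow>
            partial_bra S (uS S) \<psi> = (\<lambda>g. 0) \<and> success_prob G S \<psi> = 0)"
proof -
  have psi: "\<psi> = Uf G S f (tensor (uS S) (phi_state G R c P))"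
    by (simp add: \<psi>_def phi_state_def)
  show ?thesis
    unfolding psi
    using constant_case[OF grp finG finS neS f_into irreps finR proj Pnz cnz]
      balanced_case[OF grp finS neS f_into irreps proj]
    by blast
qed

end
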